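(* In an environment with incentivizing factor $\epsilon\ge0$, an adversarial pool with share $\alpha_\mathcal{A}$ obtains strictly larger time-averaged profit than honest mining by conducting the whale-transaction bribery attack (normalized bribes $\mathrm{br}_1=\frac{\alpha_i+\epsilon}{1-\alpha_i}$, $\mathrm{br}_2=\epsilon$) on a target block mined by a pool with share $\alpha_i\in(0,1)$, provided $$\alpha_\mathcal{A}>\frac{\alpha_i}{1-\alpha_i}+\epsilon\Big(\frac{1}{1-\alpha_i}+1\Big).$$
   Context: Model: adversarial pool and petty-compliant pools with mining-power shares summing to $1$; fixed block reward $R$; normalized bribe $\mathrm{br}$ means payment $\mathrm{br}\cdot R$; a petty-compliant pool $p_j$ deviates from honest mining iff the alternative's expected return exceeds the honest one by at least $\epsilon\alpha_jR$. Whale-transaction bribery attack: the adversary publishes fee-carrying transactions $tx_1$ (fee $\mathrm{br}_1R$, collectible by the miner of a rival block to the target) and $tx_2$ (fee $\mathrm{br}_2R$, collectible by the miner of a block extending the rival), valid only in chains not containing the target block. Facts used: with these bribes all petty-compliant pools except the target's miner prefer to mine a rival; and in steady state after difficulty adjustment, paying normalized bribe $\mathrm{br}$ per orphaned non-adversarial block gives time-averaged profit exceeding honest profit iff $\mathrm{br}<\alpha_\mathcal{A}$. *)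

theory Defs
  imports Complex_Main
begin

text \<open>Normalized bribes:
  tx1 pays br1 * R to the miner of the rival block, tx2 pays br2 * R to the miner
  of the block extending the rival.\<close>

definition whale_br1 :: "real \<Rightarrow> real \<Rightarrow> real" where
  "whale_br1 alpha_i eps = (alpha_i + eps) / (1 - alpha_i)"

definition whale_br2 :: "real \<Rightarrow> real" where
  "whale_br2 eps = eps"

definition whale_bribe :: "real \<Rightarrow> real \<Rightarrow> real" where
  "whale_bribe alpha_i eps = whale_br1 alpha_i eps + whale_br2 eps"

text \<open>Steady-state (after difficulty adjustment) time-averaged profit of the adversary
  with mining share alpha_A, when a fraction orph of all mined blocks are orphaned
  non-adversarial blocks and a normalized bribe br is paid per orphaned block.
  Difficulty adjustment keeps the main-chain block rate fixed (normalized to 1);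
  per mined block, the main chain grows by 1 - orph, the adversary mines alpha_A
  and pays orph * br * R.\<close>
definition steady_profit :: "real \<Rightarrow> real \<Rightarrow> real \<Rightarrow> real \<Rightarrow> real" where
  "steady_profit alpha_A orph br R = (alpha_A * R - orph * br * R) / (1 - orph)"

definition honest_profit :: "real \<Rightarrow> real \<Rightarrow> real" where
  "honest_profit alpha_A R = alpha_A * R"

end

theory Submission
  imports Defs
begin

text \<open>In steady state the adversary gains iff the bribe paid per orphaned block is below its
  own share; the total whale bribe is exactly the right-hand side of the hypothesis on the
  adversarial share, so that hypothesis says precisely that the attack pays off.\<close>

lemma whale_bribe_eq:
  assumes "alpha_i \<noteq> 1"
  shows "whale_bribe alpha_i eps = alpha_i / (1 - alpha_i) + eps * (1 / (1 - alpha_i) + 1)"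
proof -
  have "1 - alpha_i \<noteq> 0" using assms by simp
  then show ?thesis
    unfolding whale_bribe_def whale_br1_def whale_br2_def
    by (simp add: add_divide_distrib distrib_left)
qed

lemma steady_profit_gt_honest_iff:
  assumes "0 < orph" and "orph < 1" and "R > 0"
  shows "steady_profit alpha_A orph br R > honest_profit alpha_A R \<longleftrightarrow> br < alpha_A"
proof -
  have "steady_profit alpha_A orph br R > honest_profit alpha_A R
      \<longleftrightarrow> alpha_A * R * (1 - orph) < alpha_A * R - orph * br * R"
    using assms(2) unfolding steady_profit_def honest_profit_def
    by (simp add: pos_less_divide_eq)
  also have "\<dots> \<longleftrightarrow> orph * R * br < orph * R * alpha_A"
    by (simp add: algebra_simps)
  also have "\<dots> \<longleftrightarrow> br < alpha_A"
    using assms(1,3) by simp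
  finally show ?thesis .
qed

theorem theorem4:
  fixes alpha_A alpha_i eps R orph :: real
  assumes "eps \<ge> 0"
    and "0 < alpha_i" and "alpha_i < 1"
    and "0 < alpha_A" and "alpha_A + alpha_i \<le> 1"
    and "R > 0"
    and "0 < orph" and "orph < 1"
    and "alpha_A > alpha_i / (1 - alpha_i) + eps * (1 / (1 - alpha_i) + 1)"
  shows "steady_profit alpha_A orph (whale_bribe alpha_i eps) R > honest_profit alpha_A R"
proof -
  have "whale_bribe alpha_i eps < alpha_A"
    using whale_bribe_eq[of alpha_i eps] assms(3,9) by simp
  then show ?thesis
    using steady_profit_gt_honest_iff assms(6-8) by blast
qed

end
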